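(* Let $E$ be a finite set and let $P$ be a nonempty partition of the set $\cup P$, where $\cup P\subseteq E$. Let $M_E(P)$ be the unique partition matroid determined by $P$. Then $F(M_E(P))=P$.
   Context: For a set family $S$, $\cup S=\bigcup_{X\in S}X$. A partition of a set $U$ is a family of nonempty, pairwise disjoint subsets of $U$ with union $U$. The unique partition matroid $M_E(P)$ is the matroid $(E,\mathcal{I}_P)$ with $\mathcal{I}_P=\{X\subseteq\cup P: |X\cap D|\le 1 \text{ for all } D\in P\}$. For a matroid $M$ with independent sets $\mathcal{I}(M)$, rank function $r$ and rank $r(M)>0$: $s(M)=\{A\in\mathcal{I}(M): |A|=r(M)-1\}$; $K_M(X)=\{a\in E: r(X\cup\{a\})=r(X)+1\}$; and the forming base family is $F(M)=\{K_M(X): X\in s(M)\}$. *)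

theory Defs
  imports Main
begin

type_synonym 'a matroid = "'a set \<times> 'a set set"

definition ground :: "'a matroid \<Rightarrow> 'a set" where "ground M = fst M"
definition indep :: "'a matroid \<Rightarrow> 'a set set" where "indep M = snd M"

definition is_partition :: "'a set set \<Rightarrow> 'a set \<Rightarrow> bool" where
  "is_partition P U \<longleftrightarrow> (\<forall>D\<in>P. D \<noteq> {}) \<and>
     (\<forall>D1\<in>P. \<forall>D2\<in>P. D1 \<noteq> D2 \<longrightarrow> D1 \<inter> D2 = {}) \<and> \<Union>P = U"

definition partition_indep :: "'a set set \<Rightarrow> 'a set set" where
  "partition_indep P = {X. X \<subseteq> \<Union>P \<and> (\<forall>D\<in>P. card (X \<inter> D) \<le> 1)}"

definition partition_matroid :: "'a set \<Rightarrow> 'a set set \<Rightarrow> 'a matroid" where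
  "partition_matroid E P = (E, partition_indep P)"

definition rank :: "'a matroid \<Rightarrow> 'a set \<Rightarrow> nat" where
  "rank M X = Max {card Y | Y. Y \<subseteq> X \<and> Y \<in> indep M}"

definition matroid_rank :: "'a matroid \<Rightarrow> nat" where
  "matroid_rank M = rank M (ground M)"

definition s_fam :: "'a matroid \<Rightarrow> 'a set set" where
  "s_fam M = {A \<in> indep M. card A = matroid_rank M - 1}"

definition K_set :: "'a matroid \<Rightarrow> 'a set \<Rightarrow> 'a set" where
  "K_set M X = {a \<in> ground M. rank M (X \<union> {a}) = rank M X + 1}"

definition forming_base_family :: "'a matroid \<Rightarrow> 'a set set" where
  "forming_base_family M = {K_set M X | X. X \<in> s_fam M}"

end

theory Submission
  imports Defs
begin

text \<open>In the partition matroid the rank of a finite set X is the number of blocks of P that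
  X meets: an independent set picks at most one element from each block, and one element from
  each block met by X is independent. Hence adding a to X raises the rank iff a lies in a block
  that X misses, so K(X) is the union of the blocks missed by X. The full rank is card P, so an
  independent set of size card P - 1 misses exactly one block D, and K(X) = D; conversely
  every block D is obtained from one transversal of the other blocks.\<close>

definition blocks_meeting :: "'a set set \<Rightarrow> 'a set \<Rightarrow> 'a set set" where
  "blocks_meeting P X = {D \<in> P. X \<inter> D \<noteq> {}}"

definition block_of :: "'a set set \<Rightarrow> 'a \<Rightarrow> 'a set" where
  "block_of P x = (THE D. D \<in> P \<and> x \<in> D)"

lemma partition_block_unique:
  assumes "is_partition P U" "D \<in> P" "D' \<in> P" "x \<in> D" "x \<in> D'"
  shows "D = D'"
  using assms unfolding is_partition_def by blast

lemma block_of_eq: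
  assumes "is_partition P U" "D \<in> P" "x \<in> D"
  shows "block_of P x = D"
  unfolding block_of_def
proof (rule the_equality)
  show "D \<in> P \<and> x \<in> D" using assms(2,3) ..
  show "D' = D" if "D' \<in> P \<and> x \<in> D'" for D'
    using that partition_block_unique[OF assms(1) _ assms(2) _ assms(3)] by blast
qed

lemma block_of_in:
  assumes "is_partition P U" "x \<in> \<Union>P"
  shows "block_of P x \<in> P" "x \<in> block_of P x"
proof -
  obtain D where "D \<in> P" "x \<in> D" using assms(2) by blast
  then show "block_of P x \<in> P" "x \<in> block_of P x" using block_of_eq[OF assms(1)] by simp_all
qed

lemma blocks_meeting_eq_image:
  assumes "is_partition P U"
  shows "blocks_meeting P X = block_of P ` (X \<inter> \<Union>P)"
proof
  show "blocks_meeting P X \<subseteq> block_of P ` (X \<inter> \<Union>P)"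
  proof
    fix D assume "D \<in> blocks_meeting P X"
    then obtain x where "D \<in> P" "x \<in> X" "x \<in> D" unfolding blocks_meeting_def by blast
    then show "D \<in> block_of P ` (X \<inter> \<Union>P)" using block_of_eq[OF assms] by blast
  qed
  show "block_of P ` (X \<inter> \<Union>P) \<subseteq> blocks_meeting P X"
    using block_of_in[OF assms] unfolding blocks_meeting_def by blast
qed

lemma finite_blocks_meeting:
  assumes "is_partition P U" "finite X"
  shows "finite (blocks_meeting P X)"
  using assms by (simp add: blocks_meeting_eq_image)

lemma blocks_meeting_mono: "X \<subseteq> Y \<Longrightarrow> blocks_meeting P X \<subseteq> blocks_meeting P Y"
  unfolding blocks_meeting_def by blast

lemma blocks_meeting_insert:
  "blocks_meeting P (insert a X) = blocks_meeting P {a} \<union> blocks_meeting P X"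
  unfolding blocks_meeting_def by blast

lemma partition_block_nonempty: "is_partition P U \<Longrightarrow> D \<in> P \<Longrightarrow> D \<noteq> {}"
  unfolding is_partition_def by simp

lemma blocks_meeting_Union:
  assumes part: "is_partition P U" and "T \<subseteq> P"
  shows "blocks_meeting P (\<Union>T) = T"
proof
  show "blocks_meeting P (\<Union>T) \<subseteq> T"
  proof
    fix D assume "D \<in> blocks_meeting P (\<Union>T)"
    then obtain D' x where "D \<in> P" "D' \<in> T" "x \<in> D'" "x \<in> D" unfolding blocks_meeting_def by blast
    then show "D \<in> T" using partition_block_unique[OF part, of D' D x] \<open>T \<subseteq> P\<close> by blast
  qed
  show "T \<subseteq> blocks_meeting P (\<Union>T)"
    using partition_block_nonempty[OF part] \<open>T \<subseteq> P\<close> unfolding blocks_meeting_def by blast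
qed

lemma partition_indep_subset: "Y \<in> partition_indep P \<Longrightarrow> Y \<subseteq> \<Union>P"
  unfolding partition_indep_def by blast

lemma finite_partition_indep: "finite E \<Longrightarrow> \<Union>P \<subseteq> E \<Longrightarrow> Y \<in> partition_indep P \<Longrightarrow> finite Y"
  using partition_indep_subset finite_subset by (metis order_trans)

lemma card_partition_indep:
  assumes part: "is_partition P U" and Y: "Y \<in> partition_indep P" and fin: "finite Y"
  shows "card Y = card (blocks_meeting P Y)"
proof -
  have "inj_on (block_of P) Y"
  proof (rule inj_onI)
    fix y y' assume yy': "y \<in> Y" "y' \<in> Y" "block_of P y = block_of P y'"
    let ?D = "block_of P y"
    have "y \<in> \<Union>P" "y' \<in> \<Union>P" using yy'(1,2) partition_indep_subset[OF Y] by blast+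
    then have "?D \<in> P" "{y, y'} \<subseteq> Y \<inter> ?D"
      using yy' block_of_in[OF part] by auto
    then have "card {y, y'} \<le> 1"
      using Y fin card_mono[of "Y \<inter> ?D" "{y, y'}"] unfolding partition_indep_def by fastforce
    then show "y = y'" by (cases "y = y'") auto
  qed
  moreover have "Y \<inter> \<Union>P = Y" using partition_indep_subset[OF Y] by blast
  ultimately show ?thesis by (simp add: blocks_meeting_eq_image[OF part] card_image)
qed

lemma partition_indep_transversal:
  assumes part: "is_partition P U"
  obtains Y where "Y \<subseteq> X" "Y \<in> partition_indep P" "blocks_meeting P Y = blocks_meeting P X"
proof -
  define pick where "pick D = (SOME x. x \<in> X \<inter> D)" for D
  let ?B = "blocks_meeting P X"
  have pick: "pick D \<in> X \<inter> D" if "D \<in> ?B" for D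
    using that unfolding pick_def blocks_meeting_def by (metis (mono_tags) ex_in_conv mem_Collect_eq someI)
  have block: "D' = D" if "D' \<in> ?B" "D \<in> P" "pick D' \<in> D" for D D'
    using that pick[of D'] partition_block_unique[OF part] unfolding blocks_meeting_def by blast
  have "pick ` ?B \<subseteq> X" using pick by blast
  moreover have "pick ` ?B \<in> partition_indep P"
    unfolding partition_indep_def
  proof (intro CollectI conjI ballI)
    show "pick ` ?B \<subseteq> \<Union>P" using pick unfolding blocks_meeting_def by blast
    fix D assume "D \<in> P"
    then have "pick ` ?B \<inter> D \<subseteq> {pick D}" using block by blast
    then show "card (pick ` ?B \<inter> D) \<le> 1"
      using card_mono[of "{pick D}"] by fastforce
  qed
  moreover have "blocks_meeting P (pick ` ?B) = ?B"
    using pick block unfolding blocks_meeting_def by blast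
  ultimately show ?thesis using that by blast
qed

lemma rank_partition_matroid:
  assumes part: "is_partition P U" and fin: "finite X"
  shows "rank (partition_matroid E P) X = card (blocks_meeting P X)"
proof -
  let ?C = "{card Y | Y. Y \<subseteq> X \<and> Y \<in> partition_indep P}"
  have "?C \<subseteq> card ` Pow X" by blast
  then have "finite ?C" by (rule finite_subset) (simp add: fin)
  moreover have "c \<le> card (blocks_meeting P X)" if "c \<in> ?C" for c
  proof -
    obtain Y where Y: "Y \<subseteq> X" "Y \<in> partition_indep P" "c = card Y" using \<open>c \<in> ?C\<close> by blast
    then have "c = card (blocks_meeting P Y)"
      using card_partition_indep[OF part Y(2) finite_subset[OF Y(1) fin]] by simp
    also have "\<dots> \<le> card (blocks_meeting P X)"
      using card_mono[OF finite_blocks_meeting[OF part fin] blocks_meeting_mono[OF Y(1)]] .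
    finally show ?thesis .
  qed
  moreover have "card (blocks_meeting P X) \<in> ?C"
  proof -
    obtain Y where Y: "Y \<subseteq> X" "Y \<in> partition_indep P" "blocks_meeting P Y = blocks_meeting P X"
      using partition_indep_transversal[OF part] .
    then have "card (blocks_meeting P X) = card Y"
      using card_partition_indep[OF part Y(2)] finite_subset[OF Y(1) fin] by simp
    then show ?thesis using Y by blast
  qed
  ultimately show ?thesis
    unfolding rank_def partition_matroid_def indep_def snd_conv by (intro Max_eqI) auto
qed

lemma K_set_partition_matroid:
  assumes part: "is_partition P U" and PE: "\<Union>P \<subseteq> E" and fin: "finite A"
  shows "K_set (partition_matroid E P) A = \<Union>(P - blocks_meeting P A)"
proof (rule set_eqI)
  fix a
  let ?B = "blocks_meeting P A"
  have "a \<in> K_set (partition_matroid E P) A \<longleftrightarrow>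
      a \<in> E \<and> card (blocks_meeting P {a} \<union> ?B) = card ?B + 1"
    using rank_partition_matroid[OF part, of "insert a A"] rank_partition_matroid[OF part fin]
      fin blocks_meeting_insert[of P a A]
    by (simp add: K_set_def partition_matroid_def ground_def)
  also have "\<dots> \<longleftrightarrow> a \<in> \<Union>(P - ?B)"
  proof (cases "a \<in> \<Union>P")
    case True
    then have "blocks_meeting P {a} = {block_of P a}"
      using blocks_meeting_eq_image[OF part] by simp
    moreover have "a \<in> \<Union>(P - ?B) \<longleftrightarrow> block_of P a \<notin> ?B"
    proof
      assume "a \<in> \<Union>(P - ?B)"
      then obtain D where "D \<in> P - ?B" "a \<in> D" by blast
      then show "block_of P a \<notin> ?B" using block_of_eq[OF part] by auto
    next
      assume "block_of P a \<notin> ?B"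
      then show "a \<in> \<Union>(P - ?B)" using block_of_in[OF part True] by blast
    qed
    moreover have "a \<in> E" using True PE by blast
    ultimately show ?thesis
      using finite_blocks_meeting[OF part fin] by (simp add: card_insert_if)
  next
    case False
    then have "blocks_meeting P {a} = {}" unfolding blocks_meeting_def by blast
    then show ?thesis using False by simp
  qed
  finally show "a \<in> K_set (partition_matroid E P) A \<longleftrightarrow> a \<in> \<Union>(P - ?B)" .
qed

lemma matroid_rank_partition_matroid:
  assumes part: "is_partition P U" and PE: "\<Union>P \<subseteq> E" and fin: "finite E"
  shows "matroid_rank (partition_matroid E P) = card P"
proof -
  have "blocks_meeting P E = P"
    using partition_block_nonempty[OF part] PE unfolding blocks_meeting_def by blast
  then show ?thesis
    using rank_partition_matroid[OF part fin]
    by (simp add: matroid_rank_def partition_matroid_def ground_def)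
qed

lemma forming_base_family_partition_matroid:
  assumes part: "is_partition P U" and PE: "\<Union>P \<subseteq> E" and fin: "finite E"
  shows "forming_base_family (partition_matroid E P) =
    (\<lambda>A. \<Union>(P - blocks_meeting P A)) ` {A \<in> partition_indep P. card A = card P - 1}"
proof -
  let ?S = "{A \<in> partition_indep P. card A = card P - 1}"
  have s_fam: "s_fam (partition_matroid E P) = ?S"
    unfolding s_fam_def matroid_rank_partition_matroid[OF assms]
    by (simp add: indep_def partition_matroid_def)
  have K_set: "K_set (partition_matroid E P) A = \<Union>(P - blocks_meeting P A)" if "A \<in> ?S" for A
    using that K_set_partition_matroid[OF part PE] finite_partition_indep[OF fin PE] by blast
  show ?thesis
    unfolding forming_base_family_def Setcompr_eq_image s_fam using K_set by (rule image_cong[OF refl])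
qed

lemma partition_indep_misses_one_block:
  assumes part: "is_partition P U" and "finite P" "P \<noteq> {}"
    and Y: "Y \<in> partition_indep P" "finite Y" "card Y = card P - 1"
  obtains D where "P - blocks_meeting P Y = {D}"
proof -
  have B: "blocks_meeting P Y \<subseteq> P" unfolding blocks_meeting_def by blast
  have "card (blocks_meeting P Y) = card P - 1"
    using Y card_partition_indep[OF part] by simp
  moreover have "card P > 0" using \<open>finite P\<close> \<open>P \<noteq> {}\<close> by (simp add: card_gt_0_iff)
  ultimately have "card (P - blocks_meeting P Y) = 1"
    using card_Diff_subset[OF finite_subset[OF B \<open>finite P\<close>] B] by simp
  then show ?thesis using that by (rule card_1_singletonE)
qed

lemma partition_indep_missing_block:
  assumes part: "is_partition P U" and "D \<in> P"
  obtains Y where "Y \<in> partition_indep P" "blocks_meeting P Y = P - {D}"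
proof (rule partition_indep_transversal[OF part, of "\<Union>(P - {D})"])
  fix Y assume "Y \<in> partition_indep P" "blocks_meeting P Y = blocks_meeting P (\<Union>(P - {D}))"
  then show thesis using that blocks_meeting_Union[OF part Diff_subset] by simp
qed

theorem theorem6:
  fixes E :: "'a set" and P :: "'a set set"
  assumes "finite E"
    and "\<Union>P \<subseteq> E"
    and "P \<noteq> {}"
    and "is_partition P (\<Union>P)"
  shows "forming_base_family (partition_matroid E P) = P"
proof -
  note part = \<open>is_partition P (\<Union>P)\<close> and fin = finite_partition_indep[OF assms(1,2)]
  have "P \<subseteq> Pow E" using \<open>\<Union>P \<subseteq> E\<close> by blast
  then have "finite P" by (rule finite_subset) (simp add: \<open>finite E\<close>)
  have "\<Union>(P - blocks_meeting P A) \<in> P"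
    if A: "A \<in> partition_indep P" "card A = card P - 1" for A
  proof -
    obtain D where "P - blocks_meeting P A = {D}"
      using partition_indep_misses_one_block[OF part \<open>finite P\<close> \<open>P \<noteq> {}\<close> A(1) fin[OF A(1)] A(2)] .
    then show ?thesis by blast
  qed
  moreover have "D \<in> (\<lambda>A. \<Union>(P - blocks_meeting P A)) ` {A \<in> partition_indep P. card A = card P - 1}"
    if D: "D \<in> P" for D
  proof -
    obtain Y where Y: "Y \<in> partition_indep P" "blocks_meeting P Y = P - {D}"
      using partition_indep_missing_block[OF part D] .
    have "card Y = card P - 1"
      using card_partition_indep[OF part Y(1) fin[OF Y(1)]] Y(2) D \<open>finite P\<close> by simp
    moreover have "\<Union>(P - blocks_meeting P Y) = D" using Y(2) D by auto
    ultimately show ?thesis using Y(1) by (intro image_eqI[of _ _ Y]) auto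
  qed
  ultimately show ?thesis
    unfolding forming_base_family_partition_matroid[OF part \<open>\<Union>P \<subseteq> E\<close> \<open>finite E\<close>] by blast
qed

end
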